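(* Let $L$ be a free abelian group of rank $n$ and take $A=\mathbb{C}$. The pro-bundle $\mathcal{L}\mathrm{og}^\infty$ admits a unique continuous multiplicative trivialization $\varrho_{\mathrm{cont}}$ on $T$. The section $\varrho_{\mathrm{cont}}$ is $C^\infty$, is compatible with multiplication by $N$, and satisfies $\nabla(\varrho_{\mathrm{cont}})=-\kappa\,\varrho_{\mathrm{cont}}$. In particular $\varrho_{\mathrm{cont}}|_{T^{\mathrm{tors}}}=\varrho_{\mathrm{can}}$.
   Context: $R$ is the completion of $\mathbb{C}[L]$ (basis $\delta_\ell$) at its augmentation ideal $I$, identified with $\widehat{\mathrm{Sym}}\,L_{\mathbb{C}}$ via $\delta_\ell\mapsto\sum_k\ell^k/k!$. $V=\mathbb{R}\otimes L$, $T=V/L$. The logarithm sheaf $\mathcal{L}\mathrm{og}$ is the local system on $T$ whose sections over $U$ are the locally constant $f:\pi^{-1}(U)\to R$ with $f(v+\ell)=\delta_\ell^{-1}f(v)$. $\mathcal{L}\mathrm{og}^\infty$ is the inverse system of $C^\infty$ vector bundles associated to the local systems $\mathcal{L}\mathrm{og}/I^{k+1}\mathcal{L}\mathrm{og}$, with flat connection $\nabla$. With $x_1,\dots,x_n$ the coordinates dual to a basis $\ell_1,\dots,\ell_n$ of $L$, $\kappa=\sum_jdx_j\otimes\ell_j$ is an $R$-valued 1-form on $T$, independent of the basis. There is a unique isomorphism $\mathrm{pr}_1^*\mathcal{L}\mathrm{og}\otimes_{\underline R}\mathrm{pr}_2^*\mathcal{L}\mathrm{og}\cong+^*\mathcal{L}\mathrm{og}$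 sending $1\otimes1\mapsto1$ at the origin. A multiplicative trivialization over a subgroup $H\subset T$ is a family of generators $1_h\in\mathcal{L}\mathrm{og}_h$ ($h\in H$) with $1_h\equiv1\bmod I$ and $1_h\otimes1_{h'}\mapsto1_{h+h'}$; it is continuous on $T$ if $t\mapsto1_t$ is a continuous section of each $\mathcal{L}\mathrm{og}/I^{k+1}\mathcal{L}\mathrm{og}$. Compatibility with multiplication by $N$ means that the map $\mathcal{L}\mathrm{og}\to[N]^*\mathcal{L}\mathrm{og}$ induced by $\delta_\ell\mapsto\delta_{N\ell}$ sends $1_t$ to $1_{Nt}$. $T^{\mathrm{tors}}$ is the torsion subgroup of $T$, and $\varrho_{\mathrm{can}}$ is the unique multiplicative trivialization of $\mathcal{L}\mathrm{og}$ over $T^{\mathrm{tors}}$. *)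

theory Defs
  imports "HOL-Analysis.Analysis"
begin

text \<open>
  The lattice L is taken to be the integer points of V, where
  V = real^'n (the finite type 'n indexes the standard basis l_1,...,l_n of L,
  so rank L = CARD('n)).  T = V/L.  The coordinates x_j are v $ j.

  The ring R = completion of C[L] at the augmentation ideal is identified (as in
  the paper) with the completed symmetric algebra of L_C, i.e. formal power
  series in the basis elements l_1..l_n: an element is its coefficient family
  indexed by multi-indices 'n => nat.  Under this identification
  delta_l = exp(l) = sum_k l^k/k!, whose coefficient at alpha is
  prod_j l_j^(alpha_j)/alpha_j!.  The ideal I^(k+1) consists of the series with
  vanishing coefficients in total degree <= k, so R/I^(k+1) is the finite
  dimensional quotient given by the coefficients of degree <= k.
\<close>

type_synonym 'n rser = "('n \<Rightarrow> nat) \<Rightarrow> complex"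

definition latt :: "(real^'n) set" where
  "latt = {v. \<forall>i. v $ i \<in> \<int>}"

definition rmult :: "'n::finite rser \<Rightarrow> 'n rser \<Rightarrow> 'n rser" where
  "rmult f g = (\<lambda>a. \<Sum>b\<in>{b. \<forall>i. b i \<le> a i}. f b * g (\<lambda>i. a i - b i))"

definition delta :: "real^'n::finite \<Rightarrow> 'n rser" where
  "delta l = (\<lambda>a. \<Prod>i\<in>UNIV. complex_of_real ((l $ i) ^ (a i) / fact (a i)))"

definition lbas :: "'n \<Rightarrow> 'n rser" where
  "lbas j = (\<lambda>a. if a = (\<lambda>i. if i = j then 1 else 0) then 1 else 0)"

text \<open>The continuous ring endomorphism of R induced by delta_l |-> delta_(N l):
  on the power series side it is l |-> N l, i.e. multiplies degree-d coefficients
  by N^d.\<close>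
definition mulN :: "nat \<Rightarrow> 'n::finite rser \<Rightarrow> 'n rser" where
  "mulN N f = (\<lambda>a. of_nat N ^ (\<Sum>i\<in>UNIV. a i) * f a)"

text \<open>
  Sections of Log over T are described on the universal cover V: a fibre element
  1_t (t = class of v) is a function g on v + L with g(v + l) = delta_l^-1 g(v);
  a family (1_t) over a subgroup H of T is therefore the same as a function
  F on the preimage of H with F(v + l) = delta_(-l) F(v) (F(v) = 1_t(v)).
  The isomorphism pr_1^*Log (x) pr_2^*Log = +^*Log sends g (x) g' to
  h(u + u') = g(u) g'(u'), so multiplicativity reads F(v + w) = F(v) F(w).
  1_t = 1 mod I means the constant coefficient is 1.
\<close>
definition mult_triv_on :: "(real^'n) set \<Rightarrow> (real^'n \<Rightarrow> 'n::finite rser) \<Rightarrow> bool" where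
  "mult_triv_on H F \<longleftrightarrow>
     (\<forall>v\<in>H. \<forall>l\<in>latt. F (v + l) = rmult (delta (- l)) (F v)) \<and>
     (\<forall>v\<in>H. F v (\<lambda>i. 0) = 1) \<and>
     (\<forall>v\<in>H. \<forall>w\<in>H. F (v + w) = rmult (F v) (F w))"

text \<open>Preimage in V of the torsion subgroup of T.\<close>
definition tors_lift :: "(real^'n) set" where
  "tors_lift = {v. \<exists>m::nat. m > 0 \<and> of_nat m *\<^sub>R v \<in> latt}"

text \<open>Continuity of t |-> 1_t as a section of each Log/I^(k+1): in the local
  trivialisations given by local lifts of T, this is continuity of every
  coefficient of F on V.\<close>
definition cont_triv :: "(real^'n \<Rightarrow> 'n::finite rser) \<Rightarrow> bool" where
  "cont_triv F \<longleftrightarrow> (\<forall>a. continuous_on UNIV (\<lambda>v. F v a))"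

primrec Ck :: "nat \<Rightarrow> (real^'n::finite \<Rightarrow> complex) \<Rightarrow> bool" where
  "Ck 0 f = continuous_on UNIV f"
| "Ck (Suc k) f = (\<exists>f'. (\<forall>v. (f has_derivative f' v) (at v)) \<and> (\<forall>h. Ck k (\<lambda>v. f' v h)))"

definition Cinf :: "(real^'n::finite \<Rightarrow> complex) \<Rightarrow> bool" where
  "Cinf f \<longleftrightarrow> (\<forall>k. Ck k f)"

end

theory Submission imports Defs begin

text \<open>
  The trivialization is F(v) = \<delta>_{-v} = exp(- \<Sigma>_j x_j(v) l_j): the binomial theorem makes it
  multiplicative, and its coefficients are polynomials in v, so it is C^\<infinity> with
  \<nabla>F = -\<kappa> F.  For uniqueness, compare two multiplicative trivializations coefficient by
  coefficient in order of total degree: at the first multi-index where they may differ,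
  the difference of the coefficients is additive in v and L-periodic.  Such a function
  is bounded if it is continuous, and vanishes at torsion points v (where m v \<in> L);
  in either case additivity D(m v) = m D(v) forces it to vanish.
\<close>

subsection \<open>Multi-indices and the product of R\<close>

definition total_degree :: "('n::finite \<Rightarrow> nat) \<Rightarrow> nat" where
  "total_degree a = (\<Sum>i\<in>UNIV. a i)"

lemma multi_index_box_eq_PiE:
  "{b::'n::finite \<Rightarrow> nat. \<forall>i. b i \<le> a i} = PiE UNIV (\<lambda>i. {..a i})"
  by (auto simp: PiE_def Pi_def extensional_def)

lemma finite_multi_index_box: "finite {b::'n::finite \<Rightarrow> nat. \<forall>i. b i \<le> a i}"
  unfolding multi_index_box_eq_PiE by (rule finite_PiE) auto

lemma total_degree_less:
  "\<forall>i. b i \<le> a i \<Longrightarrow> b \<noteq> a \<Longrightarrow> total_degree b < total_degree (a::'n::finite \<Rightarrow> nat)"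
  unfolding total_degree_def
  by (rule sum_strict_mono_ex1) (auto simp: fun_eq_iff dest!: le_neq_implies_less)

lemma total_degree_diff_less:
  assumes "\<forall>i. b i \<le> a i" and "b \<noteq> (\<lambda>i. 0)"
  shows "total_degree (\<lambda>i. a i - b i) < total_degree (a::'n::finite \<Rightarrow> nat)"
proof -
  obtain j where "b j \<noteq> 0" using assms(2) by auto
  moreover have "b j \<le> a j" using assms(1) by auto
  ultimately have "a j - b j < a j" by linarith
  with assms(1) show ?thesis
    unfolding total_degree_def by (intro sum_strict_mono_ex1) auto
qed

text \<open>In degree a, a product of two series with constant term 1 only sees the degree-a
  coefficients of its factors and lower-degree data; hence this first-order formula.\<close>
lemma rmult_coeff_diff:
  fixes X Y X' Y' :: "'n::finite rser"
  assumes a: "a \<noteq> (\<lambda>i. 0)"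
    and lower: "\<And>b. total_degree b < total_degree a \<Longrightarrow> X b = X' b \<and> Y b = Y' b"
    and const: "X (\<lambda>i. 0) = 1" "X' (\<lambda>i. 0) = 1" "Y (\<lambda>i. 0) = 1" "Y' (\<lambda>i. 0) = 1"
  shows "rmult X Y a - rmult X' Y' a = (X a - X' a) + (Y a - Y' a)"
proof -
  let ?B = "{b. \<forall>i. b i \<le> a i}"
  let ?g = "\<lambda>b. X b * Y (\<lambda>i. a i - b i) - X' b * Y' (\<lambda>i. a i - b i)"
  have fin: "finite ?B" by (rule finite_multi_index_box)
  have "rmult X Y a - rmult X' Y' a = sum ?g ?B"
    unfolding rmult_def by (simp add: sum_subtractf)
  also have "\<dots> = ?g a + sum ?g (?B - {a})"
    using fin by (subst sum.remove[of _ a]) auto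
  also have "sum ?g (?B - {a}) = ?g (\<lambda>i. 0) + sum ?g (?B - {a} - {\<lambda>i. 0})"
    using fin a by (subst sum.remove[of _ "\<lambda>i. 0"]) auto
  also have "sum ?g (?B - {a} - {\<lambda>i. 0}) = 0"
  proof (rule sum.neutral, rule ballI)
    fix b assume "b \<in> ?B - {a} - {\<lambda>i. 0}"
    then have "total_degree b < total_degree a" "total_degree (\<lambda>i. a i - b i) < total_degree a"
      using total_degree_less total_degree_diff_less by auto
    then show "?g b = 0" using lower by auto
  qed
  finally show ?thesis using const by (simp add: algebra_simps)
qed

lemma rmult_lbas:
  "rmult (lbas j) X a = (if 1 \<le> a j then X (\<lambda>i. a i - (if i = j then 1 else 0)) else 0)"
proof -
  let ?e = "\<lambda>i. if i = j then 1 else (0::nat)"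
  have "rmult (lbas j) X a = (\<Sum>b\<in>{b. \<forall>i. b i \<le> a i}. if b = ?e then X (\<lambda>i. a i - ?e i) else 0)"
    unfolding rmult_def lbas_def by (rule sum.cong) auto
  also have "\<dots> = (if ?e \<in> {b. \<forall>i. b i \<le> a i} then X (\<lambda>i. a i - ?e i) else 0)"
    by (simp add: finite_multi_index_box)
  also have "(?e \<in> {b. \<forall>i. b i \<le> a i}) = (1 \<le> a j)" by auto
  finally show ?thesis by (simp add: if_distrib cong: if_cong)
qed

subsection \<open>The group-like elements \<delta>\<close>

lemma power_add_div_fact:
  "(x + y :: real) ^ n / fact n = (\<Sum>k\<le>n. x ^ k / fact k * (y ^ (n - k) / fact (n - k)))"
proof -
  have "(x + y) ^ n / fact n = (\<Sum>k\<le>n. of_nat (n choose k) * x ^ k * y ^ (n - k) / fact n)"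
    by (simp add: binomial_ring sum_divide_distrib)
  also have "\<dots> = (\<Sum>k\<le>n. x ^ k / fact k * (y ^ (n - k) / fact (n - k)))"
  proof (rule sum.cong[OF refl])
    fix k assume "k \<in> {..n}"
    then have "real (n choose k) = fact n / (fact k * fact (n - k))"
      by (simp add: binomial_fact)
    then show "of_nat (n choose k) * x ^ k * y ^ (n - k) / fact n =
        x ^ k / fact k * (y ^ (n - k) / fact (n - k))"
      by (simp add: field_simps)
  qed
  finally show ?thesis .
qed

lemma delta_add: "delta (x + y) = rmult (delta x) (delta (y :: real^'n::finite))"
proof
  fix a :: "'n \<Rightarrow> nat"
  have "rmult (delta x) (delta y) a =
     (\<Sum>b\<in>PiE UNIV (\<lambda>i. {..a i}). \<Prod>i\<in>UNIV.
        complex_of_real ((x$i) ^ b i / fact (b i) * ((y$i) ^ (a i - b i) / fact (a i - b i))))"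
    unfolding rmult_def delta_def multi_index_box_eq_PiE
    by (rule sum.cong[OF refl]) (simp add: prod.distrib[symmetric])
  also have "\<dots> = (\<Prod>i\<in>UNIV. \<Sum>k\<le>a i.
        complex_of_real ((x$i) ^ k / fact k * ((y$i) ^ (a i - k) / fact (a i - k))))"
    by (rule prod_sum_PiE[symmetric]) auto
  also have "\<dots> = delta (x + y) a"
    unfolding delta_def by (simp add: power_add_div_fact)
  finally show "delta (x + y) a = rmult (delta x) (delta y) a" by simp
qed

lemma delta_const_coeff: "delta x (\<lambda>i. 0) = 1"
  by (simp add: delta_def)

lemma delta_scaleR_of_nat: "delta (of_nat N *\<^sub>R x) = mulN N (delta (x :: real^'n::finite))"
proof
  fix a :: "'n \<Rightarrow> nat"
  have "delta (of_nat N *\<^sub>R x) a = (\<Prod>i\<in>UNIV. of_nat N ^ a i * complex_of_real ((x$i) ^ a i / fact (a i)))"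
    unfolding delta_def by (simp add: power_mult_distrib)
  also have "\<dots> = mulN N (delta x) a"
    unfolding delta_def mulN_def by (simp only: prod.distrib power_sum)
  finally show "delta (of_nat N *\<^sub>R x) a = mulN N (delta x) a" .
qed

lemma delta_coeff_split:
  "delta x a = complex_of_real ((x$i) ^ a i / fact (a i)) *
     (\<Prod>j\<in>UNIV - {i}. complex_of_real ((x$j) ^ a j / fact (a j)))"
  unfolding delta_def by (subst prod.remove[of _ i]) auto

lemma mult_triv_on_delta_neg: "mult_triv_on S (\<lambda>v::real^'n::finite. delta (- v))"
proof -
  have mult: "delta (- (v + w)) = rmult (delta (- v)) (delta (- w))" for v w :: "real^'n"
    by (metis delta_add minus_add_distrib add.commute)
  then have "delta (- (v + w)) = rmult (delta (- w)) (delta (- v))" for v w :: "real^'n"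
    by (metis add.commute)
  with mult show ?thesis
    unfolding mult_triv_on_def by (simp add: delta_const_coeff)
qed

subsection \<open>Smoothness of \<delta>\<close>

lemma has_derivative_delta_factor:
  "((\<lambda>w::real^'n::finite. complex_of_real ((w$i) ^ k / fact k)) has_derivative
     (\<lambda>h. complex_of_real (h$i * (if k = 0 then 0 else (v$i) ^ (k - 1) / fact (k - 1))))) (at v)"
proof -
  have coord: "((\<lambda>w::real^'n. w$i) has_derivative (\<lambda>h. h$i)) (at v)"
    by (rule bounded_linear_imp_has_derivative) (rule bounded_linear_vec_nth)
  have "((\<lambda>w::real^'n. (w$i) ^ k / fact k) has_derivative
      (\<lambda>h. of_nat k * h$i * (v$i) ^ (k - 1) / fact k)) (at v)"
    using has_derivative_divide'[OF has_derivative_power[OF coord] has_derivative_const, of "fact k"]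
    by (simp add: power2_eq_square)
  moreover have "(\<lambda>h. of_nat k * h$i * (v$i) ^ (k - 1) / fact k) =
      (\<lambda>h::real^'n. h$i * (if k = 0 then 0 else (v$i) ^ (k - 1) / fact (k - 1)))"
    by (cases k) (simp_all del: fact_Suc add: fact_reduce)
  ultimately show ?thesis
    by (intro has_derivative_of_real) simp
qed

lemma has_derivative_delta:
  "((\<lambda>w. delta w a) has_derivative
     (\<lambda>h. \<Sum>j\<in>UNIV. complex_of_real (h$j) * rmult (lbas j) (delta v) a)) (at (v :: real^'n::finite))"
proof -
  let ?f = "\<lambda>i (w::real^'n). complex_of_real ((w$i) ^ a i / fact (a i))"
  let ?f' = "\<lambda>i (h::real^'n).
    complex_of_real (h$i * (if a i = 0 then 0 else (v$i) ^ (a i - 1) / fact (a i - 1)))"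
  have delta_prod: "(\<lambda>w. delta w a) = (\<lambda>w. \<Prod>i\<in>UNIV. ?f i w)"
    by (simp add: delta_def fun_eq_iff)
  have product_rule: "((\<lambda>w. \<Prod>i\<in>UNIV. ?f i w) has_derivative
      (\<lambda>h. \<Sum>i\<in>UNIV. ?f' i h * (\<Prod>j\<in>UNIV - {i}. ?f j v))) (at v)"
    by (rule has_derivative_prod) (rule has_derivative_delta_factor)
  have factor_term: "?f' i h * (\<Prod>j\<in>UNIV - {i}. ?f j v) =
      complex_of_real (h$i) * rmult (lbas i) (delta v) a" for i h
  proof (cases "a i = 0")
    case True
    then show ?thesis by (simp add: rmult_lbas)
  next
    case False
    let ?a' = "\<lambda>k. a k - (if k = i then 1 else 0)"
    have "rmult (lbas i) (delta v) a = delta v ?a'"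
      using False by (simp add: rmult_lbas)
    also have "\<dots> = complex_of_real ((v$i) ^ (a i - 1) / fact (a i - 1)) *
        (\<Prod>j\<in>UNIV - {i}. complex_of_real ((v$j) ^ ?a' j / fact (?a' j)))"
      by (subst delta_coeff_split[of _ _ i]) simp
    also have "(\<Prod>j\<in>UNIV - {i}. complex_of_real ((v$j) ^ ?a' j / fact (?a' j))) =
        (\<Prod>j\<in>UNIV - {i}. ?f j v)"
      by (rule prod.cong) auto
    finally show ?thesis
      using False by simp
  qed
  show ?thesis
    unfolding delta_prod using product_rule by (rule has_derivative_eq_rhs) (simp only: factor_term)
qed

lemma has_derivative_delta_neg:
  "((\<lambda>w. delta (- w) a) has_derivative
     (\<lambda>h. \<Sum>j\<in>UNIV. complex_of_real (h$j) * (- rmult (lbas j) (delta (- v)) a)))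
   (at (v :: real^'n::finite))"
  by (rule has_derivative_eq_rhs[OF
        has_derivative_compose[OF has_derivative_minus[OF has_derivative_ident] has_derivative_delta]])
    (simp add: fun_eq_iff sum_negf)

lemma Ck_add: "Ck k f \<Longrightarrow> Ck k g \<Longrightarrow> Ck k (\<lambda>v. f v + g v)"
proof (induction k arbitrary: f g)
  case 0
  then show ?case by (auto intro: continuous_on_add)
next
  case (Suc k)
  then obtain f' g' where "\<forall>v. (f has_derivative f' v) (at v)" "\<forall>h. Ck k (\<lambda>v. f' v h)"
    and "\<forall>v. (g has_derivative g' v) (at v)" "\<forall>h. Ck k (\<lambda>v. g' v h)"
    by auto
  with Suc.IH show ?case
    by (auto intro!: exI[of _ "\<lambda>v h. f' v h + g' v h"] has_derivative_add)
qed

lemma Ck_mult_left: "Ck k f \<Longrightarrow> Ck k (\<lambda>v. c * f v)"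
proof (induction k arbitrary: f)
  case 0
  then show ?case by (auto intro: continuous_intros)
next
  case (Suc k)
  then obtain f' where "\<forall>v. (f has_derivative f' v) (at v)" "\<forall>h. Ck k (\<lambda>v. f' v h)"
    by auto
  with Suc.IH show ?case
    by (auto intro!: exI[of _ "\<lambda>v h. c * f' v h"] has_derivative_mult_right)
qed

lemma Ck_const: "Ck k (\<lambda>v. c)"
proof (induction k arbitrary: c)
  case 0
  then show ?case by simp
next
  case (Suc k)
  then show ?case by (auto intro!: exI[of _ "\<lambda>v h. 0"])
qed

lemma Ck_sum: "finite A \<Longrightarrow> (\<And>j. j \<in> A \<Longrightarrow> Ck k (g j)) \<Longrightarrow> Ck k (\<lambda>v. \<Sum>j\<in>A. g j v)"
  by (induction A rule: finite_induct) (simp_all add: Ck_const Ck_add)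

lemma Ck_delta_neg: "Ck k (\<lambda>v::real^'n::finite. delta (- v) a)"
proof (induction k arbitrary: a)
  case 0
  have "continuous_on UNIV (\<lambda>v::real^'n. delta (- v) a)"
    using has_derivative_delta_neg has_derivative_continuous
    by (blast intro: continuous_at_imp_continuous_on)
  then show ?case by simp
next
  case (Suc k)
  have "Ck k (\<lambda>v. - rmult (lbas j) (delta (- v)) a)" for j
  proof (cases "1 \<le> a j")
    case True
    then show ?thesis using Ck_mult_left[OF Suc.IH, of "-1"] by (simp add: rmult_lbas)
  next
    case False
    then show ?thesis using Ck_const[of k 0] by (simp add: rmult_lbas)
  qed
  then have "Ck k (\<lambda>v. \<Sum>j\<in>UNIV. complex_of_real (h$j) * (- rmult (lbas j) (delta (- v)) a))"
    for h :: "real^'n"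
    by (intro Ck_sum Ck_mult_left) auto
  then show ?case
    unfolding Ck.simps
    by (intro exI[of _ "\<lambda>v h. \<Sum>j\<in>UNIV. complex_of_real (h$j) * (- rmult (lbas j) (delta (- v)) a)"]
        conjI allI has_derivative_delta_neg)
qed

subsection \<open>Additive L-periodic functions\<close>

definition additive_on :: "'a::plus set \<Rightarrow> ('a \<Rightarrow> 'b::plus) \<Rightarrow> bool" where
  "additive_on S D \<longleftrightarrow> (\<forall>v\<in>S. \<forall>w\<in>S. D (v + w) = D v + D w)"

definition latt_periodic_on :: "(real^'n::finite) set \<Rightarrow> (real^'n \<Rightarrow> 'b) \<Rightarrow> bool" where
  "latt_periodic_on S D \<longleftrightarrow> (\<forall>v\<in>S. \<forall>l\<in>latt. D (v + l) = D v)"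

lemma additive_on_zero:
  fixes D :: "'a::monoid_add \<Rightarrow> 'b::ab_group_add"
  assumes "additive_on S D" and "0 \<in> S"
  shows "D 0 = 0"
proof -
  have "D (0 + 0) = D 0 + D 0" using assms unfolding additive_on_def by blast
  then show ?thesis by simp
qed

lemma additive_on_scaleR_of_nat:
  fixes D :: "'a::real_vector \<Rightarrow> 'b::real_vector"
  assumes add: "additive_on S D" and closed: "\<And>k. of_nat k *\<^sub>R v \<in> S"
  shows "D (of_nat k *\<^sub>R v) = of_nat k *\<^sub>R D v"
proof (induction k)
  case 0
  show ?case using additive_on_zero[OF add] closed[of 0] by simp
next
  case (Suc k)
  have "D (of_nat (Suc k) *\<^sub>R v) = D (of_nat k *\<^sub>R v + of_nat 1 *\<^sub>R v)"
    by (simp add: algebra_simps)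
  also have "\<dots> = D (of_nat k *\<^sub>R v) + D (of_nat 1 *\<^sub>R v)"
    using add closed unfolding additive_on_def by blast
  finally show ?case using Suc.IH by (simp add: algebra_simps)
qed

lemma scaleR_of_nat_mem_tors_lift:
  assumes "v \<in> tors_lift"
  shows "of_nat k *\<^sub>R v \<in> tors_lift"
proof -
  obtain m :: nat where m: "m > 0" "of_nat m *\<^sub>R v \<in> latt"
    using assms by (auto simp: tors_lift_def)
  then have "of_nat k *\<^sub>R (of_nat m *\<^sub>R v) \<in> latt"
    by (auto simp: latt_def mult.assoc)
  then have "of_nat m *\<^sub>R (of_nat k *\<^sub>R v) \<in> latt"
    by (metis scaleR_scaleR mult.commute)
  with m(1) show ?thesis
    unfolding tors_lift_def by blast
qed

lemma additive_latt_periodic_vanish_on_tors_lift: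
  fixes D :: "real^'n::finite \<Rightarrow> 'b::real_vector"
  assumes add: "additive_on tors_lift D" and per: "latt_periodic_on tors_lift D"
    and v: "v \<in> tors_lift"
  shows "D v = 0"
proof -
  obtain m :: nat where m: "m > 0" "of_nat m *\<^sub>R v \<in> latt"
    using v by (auto simp: tors_lift_def)
  have zero: "(0::real^'n) \<in> tors_lift"
    using scaleR_of_nat_mem_tors_lift[OF v, of 0] by simp
  have "of_nat m *\<^sub>R D v = D (of_nat m *\<^sub>R v)"
    using additive_on_scaleR_of_nat[OF add scaleR_of_nat_mem_tors_lift[OF v]] by simp
  also have "\<dots> = D (0 + of_nat m *\<^sub>R v)" by simp
  also have "\<dots> = D 0"
    using per zero m(2) unfolding latt_periodic_on_def by blast
  also have "\<dots> = 0"
    using additive_on_zero[OF add zero] .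
  finally show ?thesis using m(1) by simp
qed

text \<open>Every v is congruent modulo L to a point of the compact unit cube.\<close>
lemma bounded_range_if_continuous_latt_periodic:
  fixes D :: "real^'n::finite \<Rightarrow> 'b::real_normed_vector"
  assumes cont: "continuous_on UNIV D" and per: "latt_periodic_on UNIV D"
  shows "bounded (range D)"
proof -
  have "range D \<subseteq> D ` cbox 0 1"
  proof
    fix y assume "y \<in> range D"
    then obtain v where y: "y = D v" by auto
    define l :: "real^'n" where "l = (\<chi> i. of_int \<lfloor>v$i\<rfloor>)"
    have "l \<in> latt" by (auto simp: l_def latt_def)
    then have "D (v - l + l) = D (v - l)"
      using per unfolding latt_periodic_on_def by blast
    then have "D (v - l) = y" by (simp add: y)
    moreover have "v - l \<in> cbox 0 1"
      by (auto simp: mem_box_cart l_def) linarith+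
    ultimately show "y \<in> D ` cbox 0 1" by blast
  qed
  moreover have "compact (D ` cbox 0 1)"
    by (rule compact_continuous_image) (use cont continuous_on_subset in auto)
  ultimately show ?thesis
    using compact_imp_bounded bounded_subset by blast
qed

lemma additive_bounded_vanish:
  fixes D :: "'a::real_vector \<Rightarrow> 'b::real_normed_vector"
  assumes add: "additive_on UNIV D" and bnd: "bounded (range D)"
  shows "D v = 0"
proof (rule ccontr)
  assume nz: "D v \<noteq> 0"
  obtain B where B: "\<And>w. norm (D w) \<le> B"
    using bnd by (auto simp: bounded_iff)
  obtain m :: nat where m: "B / norm (D v) < m"
    using reals_Archimedean2 by blast
  have "of_nat m * norm (D v) = norm (D (of_nat m *\<^sub>R v))"
    using additive_on_scaleR_of_nat[OF add, of v m] by simp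
  also have "\<dots> \<le> B" by (rule B)
  finally show False using m nz by (simp add: field_simps)
qed

subsection \<open>Uniqueness of multiplicative trivializations\<close>

lemma mult_triv_on_coeff_diff_additive_periodic:
  fixes G F :: "real^'n::finite \<Rightarrow> 'n rser"
  assumes G: "mult_triv_on S G" and F: "mult_triv_on S F" and a: "a \<noteq> (\<lambda>i. 0)"
    and lower: "\<And>v b. v \<in> S \<Longrightarrow> total_degree b < total_degree a \<Longrightarrow> G v b = F v b"
  shows "additive_on S (\<lambda>v. G v a - F v a) \<and> latt_periodic_on S (\<lambda>v. G v a - F v a)"
proof -
  have const: "G v (\<lambda>i. 0) = 1" "F v (\<lambda>i. 0) = 1" if "v \<in> S" for v
    using G F that by (simp_all add: mult_triv_on_def)
  have "G (v + w) a - F (v + w) a = (G v a - F v a) + (G w a - F w a)" if "v \<in> S" "w \<in> S" for v w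
  proof -
    have "G (v + w) a - F (v + w) a = rmult (G v) (G w) a - rmult (F v) (F w) a"
      using G F that by (simp add: mult_triv_on_def)
    also have "\<dots> = (G v a - F v a) + (G w a - F w a)"
      by (rule rmult_coeff_diff[OF a]) (use lower const that in auto)
    finally show ?thesis .
  qed
  moreover have "G (v + l) a - F (v + l) a = G v a - F v a" if "v \<in> S" "l \<in> latt" for v l
  proof -
    have "G (v + l) a - F (v + l) a = rmult (delta (- l)) (G v) a - rmult (delta (- l)) (F v) a"
      using G F that by (simp add: mult_triv_on_def)
    also have "\<dots> = (delta (- l) a - delta (- l) a) + (G v a - F v a)"
      by (rule rmult_coeff_diff[OF a]) (use lower const that delta_const_coeff in auto)
    finally show ?thesis by simp
  qed
  ultimately show ?thesis
    unfolding additive_on_def latt_periodic_on_def by blast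
qed

lemma mult_triv_on_unique:
  fixes G F :: "real^'n::finite \<Rightarrow> 'n rser"
  assumes G: "mult_triv_on S G" and F: "mult_triv_on S F"
    and vanish: "\<And>a. additive_on S (\<lambda>v. G v a - F v a) \<Longrightarrow>
        latt_periodic_on S (\<lambda>v. G v a - F v a) \<Longrightarrow> \<forall>v\<in>S. G v a = F v a"
  shows "\<forall>v\<in>S. G v = F v"
proof -
  have "\<forall>v\<in>S. G v a = F v a" for a
  proof (induction "total_degree a" arbitrary: a rule: less_induct)
    case less
    show ?case
    proof (cases "a = (\<lambda>i. 0)")
      case True
      then show ?thesis using G F by (simp add: mult_triv_on_def)
    next
      case False
      have "additive_on S (\<lambda>v. G v a - F v a) \<and> latt_periodic_on S (\<lambda>v. G v a - F v a)"
        using less by (intro mult_triv_on_coeff_diff_additive_periodic[OF G F False]) blast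
      then show ?thesis
        using vanish by blast
    qed
  qed
  then show ?thesis by (simp add: fun_eq_iff)
qed

lemma mult_triv_on_UNIV_unique:
  fixes G F :: "real^'n::finite \<Rightarrow> 'n rser"
  assumes G: "mult_triv_on UNIV G" "cont_triv G" and F: "mult_triv_on UNIV F" "cont_triv F"
  shows "G = F"
proof -
  have diff_cont: "continuous_on UNIV (\<lambda>v. G v a - F v a)" for a
    using G(2) F(2) unfolding cont_triv_def by (auto intro: continuous_on_diff)
  have "G v a = F v a"
    if "additive_on UNIV (\<lambda>v. G v a - F v a)" and "latt_periodic_on UNIV (\<lambda>v. G v a - F v a)"
    for a v
    using additive_bounded_vanish[OF that(1)
        bounded_range_if_continuous_latt_periodic[OF diff_cont that(2)], of v]
    by simp
  then have "\<forall>v\<in>UNIV. G v = F v"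
    by (intro mult_triv_on_unique[OF G(1) F(1)]) blast
  then show ?thesis by auto
qed

lemma mult_triv_on_tors_lift_unique:
  fixes G F :: "real^'n::finite \<Rightarrow> 'n rser"
  assumes G: "mult_triv_on tors_lift G" and F: "mult_triv_on tors_lift F"
  shows "\<forall>v\<in>tors_lift. G v = F v"
proof -
  have "G v a = F v a"
    if "additive_on tors_lift (\<lambda>v. G v a - F v a)"
      and "latt_periodic_on tors_lift (\<lambda>v. G v a - F v a)"
      and "v \<in> tors_lift" for a v
    using additive_latt_periodic_vanish_on_tors_lift[OF that] by simp
  then show ?thesis
    by (intro mult_triv_on_unique[OF G F]) blast
qed

theorem mainTheorem13:
  "\<exists>F :: real^'n::finite \<Rightarrow> 'n rser.
     mult_triv_on UNIV F \<and> cont_triv F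
   \<and> (\<forall>G. mult_triv_on UNIV G \<and> cont_triv G \<longrightarrow> G = F)
   \<and> (\<forall>a. Cinf (\<lambda>v. F v a))
   \<and> (\<forall>N::nat. N > 0 \<longrightarrow> (\<forall>v. F (of_nat N *\<^sub>R v) = mulN N (F v)))
   \<and> (\<forall>v a. ((\<lambda>w. F w a) has_derivative
          (\<lambda>h. \<Sum>j\<in>UNIV. complex_of_real (h $ j) * (- rmult (lbas j) (F v) a))) (at v))
   \<and> (\<forall>G. mult_triv_on tors_lift G \<longrightarrow> (\<forall>v\<in>tors_lift. G v = F v))"
proof (intro exI[of _ "\<lambda>v. delta (- v)"] conjI allI impI)
  show mult: "mult_triv_on S (\<lambda>v::real^'n. delta (- v))" for S
    by (rule mult_triv_on_delta_neg)
  have "Ck 0 (\<lambda>v::real^'n. delta (- v) a)" for a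
    by (rule Ck_delta_neg)
  then show cont: "cont_triv (\<lambda>v::real^'n. delta (- v))"
    by (simp add: cont_triv_def)
  show "Cinf (\<lambda>v::real^'n. delta (- v) a)" for a
    unfolding Cinf_def using Ck_delta_neg by blast
  show "delta (- (of_nat N *\<^sub>R v)) = mulN N (delta (- v))" for N and v :: "real^'n"
    unfolding scaleR_minus_right[symmetric] by (rule delta_scaleR_of_nat)
  show "((\<lambda>w. delta (- w) a) has_derivative
      (\<lambda>h. \<Sum>j\<in>UNIV. complex_of_real (h$j) * (- rmult (lbas j) (delta (- v)) a))) (at v)"
    for v :: "real^'n" and a
    by (rule has_derivative_delta_neg)
  show "G = (\<lambda>v. delta (- v))" if "mult_triv_on UNIV G \<and> cont_triv G"
    for G :: "real^'n \<Rightarrow> 'n rser"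
    using that by (intro mult_triv_on_UNIV_unique mult cont) auto
  show "\<forall>v\<in>tors_lift. G v = delta (- v)" if "mult_triv_on tors_lift G"
    for G :: "real^'n \<Rightarrow> 'n rser"
    using that mult by (rule mult_triv_on_tors_lift_unique)
qed

end
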